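(* Assume $\gamma$ is radial and satisfies, near $r=\sqrt{x^2+y^2}=0$, $\gamma(r)=h+\frac{r^2}{2R_1}+\frac{r^4}{8R_3^3}+O(r^6)$. Let $f_0\in\mathbb R$ and let $\varpi_0$ be the unique solution of $-\frac1{12}\mathrm{div}(\gamma^3\nabla\varpi_0)=f_0$ in $B(\mathbf 0,L)$, $\varpi_0=0$ on $\partial B(\mathbf 0,L)$. Then $$\int_{B(\mathbf 0,L)}\gamma^3|\nabla\varpi_0|^2=72\pi|f_0|^2\Big[\frac{R_1^2}{h}-\frac{3R_1^4}{R_3^3}|\ln h|\Big]+O(1),$$ where $O(1)$ denotes a quantity bounded, for all $h\in(0,1]$, by a constant independent of $h$.
   Context: $R,S>0$ are the radii of two spheres, $0<L<\min(R,S)$, and $R_1,R_3>0$ are defined by $\frac1{R_1}=\frac1S+\frac1R$, $\frac1{R_3^3}=\frac1{S^3}+\frac1{R^3}$. On $B(\mathbf 0,L)\subset\mathbb R^2$, $\gamma_t(x,y)=S-\sqrt{S^2-x^2-y^2}$, $\gamma_b(x,y)=-R+\sqrt{R^2-x^2-y^2}$ and, for $h>0$, $\gamma=h+\gamma_t-\gamma_b$. *)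

theory Defs
  imports "HOL-Analysis.Analysis"
begin

text \<open>Points of R^2 are pairs (x,y) :: real \<times> real; the product norm is sqrt(x^2+y^2).\<close>

definition gamma_t :: "real \<Rightarrow> real \<times> real \<Rightarrow> real" where
  "gamma_t S p = S - sqrt (S\<^sup>2 - (fst p)\<^sup>2 - (snd p)\<^sup>2)"

definition gamma_b :: "real \<Rightarrow> real \<times> real \<Rightarrow> real" where
  "gamma_b R p = - R + sqrt (R\<^sup>2 - (fst p)\<^sup>2 - (snd p)\<^sup>2)"

definition gap :: "real \<Rightarrow> real \<Rightarrow> real \<Rightarrow> real \<times> real \<Rightarrow> real" where
  "gap R S h p = h + gamma_t S p - gamma_b R p"

text \<open>G is the gradient of w on the open ball; the flux gap^3 G is
  differentiable with derivative F' p, whose trace is the divergence.\<close>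

definition solves_reynolds ::
  "real \<Rightarrow> real \<Rightarrow> real \<Rightarrow> real \<Rightarrow> real \<Rightarrow>
   (real \<times> real \<Rightarrow> real) \<Rightarrow> (real \<times> real \<Rightarrow> real \<times> real) \<Rightarrow> bool" where
  "solves_reynolds R S h L f0 w G \<longleftrightarrow>
     continuous_on (cball 0 L) w \<and>
     (\<forall>p\<in>sphere 0 L. w p = 0) \<and>
     (\<forall>p\<in>ball 0 L. (w has_derivative (\<lambda>v. G p \<bullet> v)) (at p)) \<and>
     (\<exists>F'. \<forall>p\<in>ball 0 L.
        ((\<lambda>q. (gap R S h q)^3 *\<^sub>R G q) has_derivative F' p) (at p) \<and>
        - (1/12) * (fst (F' p (1,0)) + snd (F' p (0,1))) = f0)"

end

theory Submission
  imports Defs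
begin

(* The gap is radial, gap = h + c(|x|^2) with c = cap_height S + cap_height R, and so is the
   solution: a comparison principle for div (gap^3 grad u), with the strict subsolution
   Phi(x) = int_0^(|x|^2) (h + c)^-3 as barrier, shows that every classical solution has gradient
   -6 f0 x / gap^3.  Hence gap^3 |grad w|^2 = 36 f0^2 |x|^2 / gap^3, and polar coordinates turn the
   energy into 36 pi f0^2 int_0^(L^2) rho / (h + c(rho))^3 drho.  Since
   c(rho) = a rho + b rho^2 + O(rho^3) with a = 1/(2 R1) and b = 1/(8 R3^3), the integrand is
   rho/(h + a rho)^3 - 3 b rho^3/(h + a rho)^4 up to a bounded remainder, and these two terms
   integrate to 1/(2 a^2 h) + O(1) and (3 b/a^4) ln h + O(1). *)

section \<open>Asymptotics of the radial energy integral\<close>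

definition cap_height :: "real \<Rightarrow> real \<Rightarrow> real" where
  "cap_height S \<rho> = S - sqrt (S\<^sup>2 - \<rho>)"

lemma cap_height_bounds:
  fixes S \<rho> :: real
  assumes S: "S > 0" and \<rho>: "0 \<le> \<rho>" "\<rho> \<le> S\<^sup>2"
  shows "\<rho> / (2*S) \<le> cap_height S \<rho>"
    and "cap_height S \<rho> - \<rho> / (2*S) \<le> \<rho>\<^sup>2 / (2*S^3)"
    and "\<bar>cap_height S \<rho> - \<rho> / (2*S) - \<rho>\<^sup>2 / (8*S^3)\<bar> \<le> \<rho>^3 / (2*S^5)"
proof -
  define s where "s = sqrt (S\<^sup>2 - \<rho>)"
  have s: "0 \<le> s" "s \<le> S" "\<rho> = S\<^sup>2 - s\<^sup>2"
    using \<rho> S by (auto simp: s_def real_sqrt_le_iff' intro!: real_le_lsqrt)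
  have cap: "cap_height S \<rho> = S - s"
    by (simp add: cap_height_def s_def)
  have "(S - s) * S \<le> (S - s) * (S + s)"
    using s by (intro mult_left_mono) auto
  also have "\<dots> = \<rho>"
    using s by (simp add: power2_eq_square algebra_simps)
  finally have dist: "S - s \<le> \<rho> / S"
    using S by (simp add: field_simps)
  \<comment> \<open>Exact remainders, from \<open>\<rho> = (S - s)(S + s)\<close>.\<close>
  have first: "S - s - \<rho> / (2*S) = (S - s)\<^sup>2 / (2*S)"
    unfolding s(3) using S by (simp add: field_simps) algebra
  have second: "S - s - \<rho> / (2*S) - \<rho>\<^sup>2 / (8*S^3) = (S - s)^3 * (s + 3*S) / (8*S^3)"
    unfolding s(3) using S by (simp add: field_simps) algebra
  have "0 \<le> (S - s)\<^sup>2 / (2*S)"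
    using S by simp
  then show "\<rho> / (2*S) \<le> cap_height S \<rho>"
    unfolding cap using first by linarith
  have "(S - s)\<^sup>2 / (2*S) \<le> (\<rho> / S)\<^sup>2 / (2*S)"
    using dist s S by (intro divide_right_mono power_mono) auto
  also have "\<dots> = \<rho>\<^sup>2 / (2*S^3)"
    using S by (simp add: field_simps power2_eq_square power3_eq_cube)
  finally show "cap_height S \<rho> - \<rho> / (2*S) \<le> \<rho>\<^sup>2 / (2*S^3)"
    using first by (simp add: cap)
  have "(S - s)^3 * (s + 3*S) \<le> (\<rho> / S)^3 * (4*S)"
    using dist s S \<rho> by (intro mult_mono power_mono) auto
  hence "(S - s)^3 * (s + 3*S) / (8*S^3) \<le> (\<rho> / S)^3 * (4*S) / (8*S^3)"
    using S by (intro divide_right_mono) auto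
  also have "\<dots> = \<rho>^3 / (2*S^5)"
    using S by (simp add: field_simps eval_nat_numeral)
  finally show "\<bar>cap_height S \<rho> - \<rho> / (2*S) - \<rho>\<^sup>2 / (8*S^3)\<bar> \<le> \<rho>^3 / (2*S^5)"
    unfolding cap second using s(1,2) S by simp
qed

lemma inverse_cube_taylor_bounds:
  fixes x d :: real
  assumes x: "x > 0" and d: "d \<ge> 0"
  shows "0 \<le> 1/(x+d)^3 - 1/x^3 + 3*d/x^4"
    and "1/(x+d)^3 - 1/x^3 + 3*d/x^4 \<le> 6*d\<^sup>2/x^5"
proof -
  have xd: "x + d > 0" using x d by simp
  have exact: "1/(x+d)^3 - 1/x^3 + 3*d/x^4 = (6*x\<^sup>2*d\<^sup>2 + 8*x*d^3 + 3*d^4) * x / (x^5*(x+d)^3)"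
    using x xd by (simp add: field_simps) algebra
  show "0 \<le> 1/(x+d)^3 - 1/x^3 + 3*d/x^4"
    unfolding exact using x d by simp
  have "6*d\<^sup>2 * (x+d)^3 - (6*x\<^sup>2*d\<^sup>2 + 8*x*d^3 + 3*d^4) * x = 10*x\<^sup>2*d^3 + 15*x*d^4 + 6*d^5"
    by algebra
  moreover have "0 \<le> 10*x\<^sup>2*d^3 + 15*x*d^4 + 6*d^5"
    using x d by simp
  ultimately have "(6*x\<^sup>2*d\<^sup>2 + 8*x*d^3 + 3*d^4) * x \<le> 6*d\<^sup>2 * (x+d)^3"
    by linarith
  then have "(6*x\<^sup>2*d\<^sup>2 + 8*x*d^3 + 3*d^4) * x / (x^5*(x+d)^3) \<le> 6*d\<^sup>2 * (x+d)^3 / (x^5*(x+d)^3)"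
    using x xd by (intro divide_right_mono) auto
  also have "\<dots> = 6*d\<^sup>2/x^5"
    using xd by simp
  finally show "1/(x+d)^3 - 1/x^3 + 3*d/x^4 \<le> 6*d\<^sup>2/x^5"
    unfolding exact .
qed

lemma inverse_cube_perturbation_bound:
  fixes x d \<rho> a b c1 c2 :: real
  assumes x: "x > 0" and a: "a > 0" and \<rho>: "\<rho> \<ge> 0" "a*\<rho> \<le> x"
    and d: "0 \<le> d" "d \<le> c1*\<rho>\<^sup>2" "\<bar>d - b*\<rho>\<^sup>2\<bar> \<le> c2*\<rho>^3" and c2: "c2 \<ge> 0"
  shows "\<bar>\<rho>/(x+d)^3 - \<rho>/x^3 + 3*b*\<rho>^3/x^4\<bar> \<le> 6*c1\<^sup>2/a^5 + 3*c2/a^4"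
proof -
  define T where "T = 1/(x+d)^3 - 1/x^3 + 3*d/x^4"
  have T: "0 \<le> T" "T \<le> 6*d\<^sup>2/x^5"
    using inverse_cube_taylor_bounds[OF x d(1)] by (auto simp: T_def)
  have split: "\<rho>/(x+d)^3 - \<rho>/x^3 + 3*b*\<rho>^3/x^4 = \<rho>*T + 3*\<rho>*(b*\<rho>\<^sup>2 - d)/x^4"
    unfolding T_def using x by (simp add: field_simps power2_eq_square power3_eq_cube)
  have "(a*\<rho>)^5 \<le> x^5" "(a*\<rho>)^4 \<le> x^4"
    using \<rho> a by (auto intro!: power_mono)
  then have small: "\<rho>^5/x^5 \<le> 1/a^5" "\<rho>^4/x^4 \<le> 1/a^4"
    using a x by (auto simp: power_mult_distrib field_simps)
  have "\<bar>\<rho>*T\<bar> \<le> \<rho>*(6*d\<^sup>2/x^5)"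
    using T \<rho> by (simp only: abs_mult abs_of_nonneg) (rule mult_left_mono)
  also have "\<dots> \<le> \<rho>*(6*(c1*\<rho>\<^sup>2)\<^sup>2/x^5)"
    using d \<rho> x by (intro mult_left_mono divide_right_mono) (auto intro!: power_mono)
  also have "\<dots> = 6*c1\<^sup>2*(\<rho>^5/x^5)"
    by (simp add: power2_eq_square eval_nat_numeral)
  also have "\<dots> \<le> 6*c1\<^sup>2*(1/a^5)"
    using small by (intro mult_left_mono) auto
  finally have first: "\<bar>\<rho>*T\<bar> \<le> 6*c1\<^sup>2/a^5" by simp
  have "\<bar>3*\<rho>*(b*\<rho>\<^sup>2 - d)/x^4\<bar> \<le> 3*\<rho>*(c2*\<rho>^3)/x^4"
    using d \<rho> x by (simp add: abs_mult abs_minus_commute divide_right_mono mult_left_mono)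
  also have "\<dots> = 3*c2*(\<rho>^4/x^4)"
    by (simp add: eval_nat_numeral)
  also have "\<dots> \<le> 3*c2*(1/a^4)"
    using small c2 by (intro mult_left_mono) auto
  finally have second: "\<bar>3*\<rho>*(b*\<rho>\<^sup>2 - d)/x^4\<bar> \<le> 3*c2/a^4" by simp
  show ?thesis
    unfolding split using first second by linarith
qed

definition leading_primitive :: "real \<Rightarrow> real \<Rightarrow> real \<Rightarrow> real" where
  "leading_primitive a h \<rho> = - (1/a\<^sup>2) * (1/(h + a*\<rho>) - h/(2*(h + a*\<rho>)\<^sup>2))"

definition log_primitive :: "real \<Rightarrow> real \<Rightarrow> real \<Rightarrow> real" where
  "log_primitive a h \<rho> = (1/a^4) *
     (ln (h + a*\<rho>) + 3*h/(h + a*\<rho>) - 3*h\<^sup>2/(2*(h + a*\<rho>)\<^sup>2) + h^3/(3*(h + a*\<rho>)^3))"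

lemma leading_primitive_deriv:
  "a > 0 \<Longrightarrow> h + a*x > 0 \<Longrightarrow>
    (leading_primitive a h has_real_derivative x/(h + a*x)^3) (at x)"
  unfolding leading_primitive_def
  apply (rule derivative_eq_intros refl | force)+
  apply (simp add: divide_simps)
  apply algebra
  done

lemma log_primitive_deriv:
  "a > 0 \<Longrightarrow> h + a*x > 0 \<Longrightarrow>
    (log_primitive a h has_real_derivative x^3/(h + a*x)^4) (at x)"
  unfolding log_primitive_def
  apply (rule derivative_eq_intros refl | force)+
  apply (simp add: divide_simps)
  apply algebra
  done

lemma has_integral_leading_primitive:
  assumes a: "a > 0" and h: "h > 0" and M: "M \<ge> 0"
  shows "((\<lambda>\<rho>. \<rho>/(h + a*\<rho>)^3) has_integral leading_primitive a h M + 1/(2*a\<^sup>2*h)) {0..M}"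
proof -
  have "((\<lambda>\<rho>. \<rho>/(h + a*\<rho>)^3) has_integral leading_primitive a h M - leading_primitive a h 0) {0..M}"
  proof (rule fundamental_theorem_of_calculus[OF M])
    fix x :: real assume "x \<in> {0..M}"
    then have x: "h + a*x > 0" using a h by (simp add: add_pos_nonneg)
    from leading_primitive_deriv[OF a x]
    show "(leading_primitive a h has_vector_derivative x/(h + a*x)^3) (at x within {0..M})"
      by (simp add: has_real_derivative_iff_has_vector_derivative has_vector_derivative_at_within)
  qed
  moreover have "leading_primitive a h 0 = - 1/(2*a\<^sup>2*h)"
    unfolding leading_primitive_def using h by (simp add: field_simps power2_eq_square)
  ultimately show ?thesis by simp
qed

lemma has_integral_log_primitive:
  assumes a: "a > 0" and h: "h > 0" and M: "M \<ge> 0"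
  shows "((\<lambda>\<rho>. \<rho>^3/(h + a*\<rho>)^4) has_integral log_primitive a h M - (ln h + 11/6)/a^4) {0..M}"
proof -
  have "((\<lambda>\<rho>. \<rho>^3/(h + a*\<rho>)^4) has_integral log_primitive a h M - log_primitive a h 0) {0..M}"
  proof (rule fundamental_theorem_of_calculus[OF M])
    fix x :: real assume "x \<in> {0..M}"
    then have x: "h + a*x > 0" using a h by (simp add: add_pos_nonneg)
    from log_primitive_deriv[OF a x]
    show "(log_primitive a h has_vector_derivative x^3/(h + a*x)^4) (at x within {0..M})"
      by (simp add: has_real_derivative_iff_has_vector_derivative has_vector_derivative_at_within)
  qed
  moreover have "log_primitive a h 0 = (ln h + 11/6)/a^4"
    unfolding log_primitive_def using h by (simp add: field_simps power2_eq_square power3_eq_cube)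
  ultimately show ?thesis by simp
qed

lemma leading_primitive_bound:
  assumes a: "a > 0" and h: "h > 0" and M: "M > 0"
  shows "\<bar>leading_primitive a h M\<bar> \<le> 1/(a^3*M)"
proof -
  define X where "X = h + a*M"
  have X: "X > 0" "a*M \<le> X" "h \<le> X" using a h M by (auto simp: X_def intro: add_pos_pos)
  have eq: "h/(2*X\<^sup>2) = (h/X) * (1/(2*X))"
    by (simp add: power2_eq_square)
  have hX: "0 \<le> h/X" "h/X \<le> 1"
    using X h by auto
  have "0 \<le> (h/X) * (1/(2*X))"
    using hX X by (intro mult_nonneg_nonneg) auto
  moreover have "(h/X) * (1/(2*X)) \<le> 1/(2*X)"
    using hX X by (intro mult_left_le_one_le) auto
  ultimately have "0 \<le> h/(2*X\<^sup>2)" "h/(2*X\<^sup>2) \<le> 1/(2*X)"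
    unfolding eq .
  then have "\<bar>1/X - h/(2*X\<^sup>2)\<bar> \<le> 1/X"
    using X by (simp add: abs_le_iff)
  also have "\<dots> \<le> 1/(a*M)"
    using X a M by (intro divide_left_mono) auto
  finally have "(1/a\<^sup>2) * \<bar>1/X - h/(2*X\<^sup>2)\<bar> \<le> (1/a\<^sup>2) * (1/(a*M))"
    by (intro mult_left_mono) auto
  then show ?thesis
    unfolding leading_primitive_def X_def[symmetric] using a
    by (simp add: abs_mult power2_eq_square power3_eq_cube)
qed

lemma log_primitive_bound:
  assumes a: "a > 0" and h: "0 < h" "h \<le> 1" and M: "M > 0"
  shows "\<bar>log_primitive a h M\<bar> \<le> (\<bar>ln (a*M)\<bar> + \<bar>ln (a*M + 1)\<bar> + 3)/a^4"
proof -
  define X where "X = h + a*M"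
  define t where "t = h/X"
  have X: "a*M \<le> X" "X \<le> a*M + 1" "h \<le> X" using a h M by (auto simp: X_def)
  have X0: "X > 0" using X h by linarith
  then have t: "0 \<le> t" "t \<le> 1" using X h by (auto simp: t_def)
  have "ln (a*M) \<le> ln X" "ln X \<le> ln (a*M + 1)"
    using X X0 a M by (auto intro!: ln_mono)
  moreover have "t\<^sup>2 \<le> t" "t^3 \<le> t\<^sup>2" "0 \<le> t^3"
    using t power_decreasing[of 1 2 t] power_decreasing[of 2 3 t] by auto
  then have "0 \<le> 3*t - 3*t\<^sup>2/2 + t^3/3" "3*t - 3*t\<^sup>2/2 + t^3/3 \<le> 3"
    using t by linarith+
  ultimately have "\<bar>ln X + (3*t - 3*t\<^sup>2/2 + t^3/3)\<bar> \<le> \<bar>ln (a*M)\<bar> + \<bar>ln (a*M + 1)\<bar> + 3"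
    by linarith
  moreover have "log_primitive a h M = (ln X + (3*t - 3*t\<^sup>2/2 + t^3/3))/a^4"
    unfolding log_primitive_def X_def[symmetric] t_def
    by (simp add: power_divide field_simps)
  ultimately show ?thesis
    using a by (simp add: divide_right_mono)
qed

lemma inverse_cube_remainder_integral_bound:
  fixes a b c1 c2 M h :: real and q :: "real \<Rightarrow> real"
  assumes a: "a > 0" and M: "M \<ge> 0" and c2: "c2 \<ge> 0" and h: "h > 0"
    and q: "continuous_on {0..M} q"
    and q_expansion: "\<And>\<rho>. \<rho> \<in> {0..M} \<Longrightarrow>
      a*\<rho> \<le> q \<rho> \<and> q \<rho> - a*\<rho> \<le> c1*\<rho>\<^sup>2 \<and> \<bar>q \<rho> - a*\<rho> - b*\<rho>\<^sup>2\<bar> \<le> c2*\<rho>^3"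
  shows "\<bar>integral {0..M} (\<lambda>\<rho>. \<rho>/(h + q \<rho>)^3) - (leading_primitive a h M + 1/(2*a\<^sup>2*h))
      + 3*b*(log_primitive a h M - (ln h + 11/6)/a^4)\<bar> \<le> M * (6*c1\<^sup>2/a^5 + 3*c2/a^4)"
    (is "\<bar>?J\<bar> \<le> M * ?K")
proof -
  define rem where "rem = (\<lambda>\<rho>. \<rho>/(h + q \<rho>)^3 - \<rho>/(h + a*\<rho>)^3 + 3*b*(\<rho>^3/(h + a*\<rho>)^4))"
  have "h + q \<rho> \<noteq> 0" if "\<rho> \<in> {0..M}" for \<rho>
  proof -
    have "0 \<le> a*\<rho>" using a that by simp
    then show ?thesis using q_expansion[OF that] h by linarith
  qed
  then have "(\<lambda>\<rho>. \<rho>/(h + q \<rho>)^3) integrable_on {0..M}"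
    by (intro integrable_continuous_interval continuous_intros q) auto
  then have rem_integral: "(rem has_integral ?J) {0..M}"
    unfolding rem_def using M a h
    by (intro has_integral_add has_integral_diff has_integral_mult_right integrable_integral
        has_integral_leading_primitive has_integral_log_primitive) auto
  have rem_bound: "norm (rem \<rho>) \<le> ?K" if \<rho>: "\<rho> \<in> {0..M}" for \<rho>
  proof -
    have "h + a*\<rho> > 0" using a h \<rho> by (simp add: add_pos_nonneg)
    then have "\<bar>\<rho>/((h + a*\<rho>) + (q \<rho> - a*\<rho>))^3 - \<rho>/(h + a*\<rho>)^3 + 3*b*\<rho>^3/(h + a*\<rho>)^4\<bar> \<le> ?K"
      using q_expansion[OF \<rho>] \<rho> a h c2 by (intro inverse_cube_perturbation_bound) auto
    then show ?thesis by (simp add: rem_def)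
  qed
  have "?K \<ge> 0"
    using a c2 by simp
  from has_integral_bound_real[OF this finite.emptyI rem_integral] rem_bound
  have "\<bar>?J\<bar> \<le> ?K * measure lborel {0..M}"
    by simp
  then show ?thesis
    using M by (simp add: mult.commute)
qed

lemma inverse_cube_integral_asymptotics:
  fixes a b c1 c2 M :: real and q :: "real \<Rightarrow> real"
  assumes a: "a > 0" and M: "M > 0" and c2: "c2 \<ge> 0" and q: "continuous_on {0..M} q"
    and q_expansion: "\<And>\<rho>. \<rho> \<in> {0..M} \<Longrightarrow>
      a*\<rho> \<le> q \<rho> \<and> q \<rho> - a*\<rho> \<le> c1*\<rho>\<^sup>2 \<and> \<bar>q \<rho> - a*\<rho> - b*\<rho>\<^sup>2\<bar> \<le> c2*\<rho>^3"
  shows "\<exists>C. \<forall>h\<in>{0<..1}.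
    \<bar>integral {0..M} (\<lambda>\<rho>. \<rho>/(h + q \<rho>)^3) - (1/(2*a\<^sup>2*h) + 3*b/a^4 * ln h)\<bar> \<le> C"
proof (intro exI ballI)
  fix h :: real assume "h \<in> {0<..1}"
  then have h: "0 < h" "h \<le> 1" by auto
  define I where "I = integral {0..M} (\<lambda>\<rho>. \<rho>/(h + q \<rho>)^3)"
  define J where "J = I - (leading_primitive a h M + 1/(2*a\<^sup>2*h))
      + 3*b*(log_primitive a h M - (ln h + 11/6)/a^4)"
  have "\<bar>J\<bar> \<le> M * (6*c1\<^sup>2/a^5 + 3*c2/a^4)"
    unfolding J_def I_def
    using inverse_cube_remainder_integral_bound[OF a _ c2 h(1) q q_expansion] M by simp
  moreover have "\<bar>leading_primitive a h M\<bar> \<le> 1/(a^3*M)"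
    using leading_primitive_bound[OF a h(1) M] .
  moreover have "\<bar>3*b*log_primitive a h M\<bar> = (3*\<bar>b\<bar>) * \<bar>log_primitive a h M\<bar>"
    by (simp add: abs_mult)
  moreover have "\<dots> \<le> (3*\<bar>b\<bar>) * ((\<bar>ln (a*M)\<bar> + \<bar>ln (a*M + 1)\<bar> + 3)/a^4)"
    using log_primitive_bound[OF a h M] by (intro mult_left_mono) auto
  moreover have "\<bar>3*b*(11/6)/a^4\<bar> = 11/2*\<bar>b\<bar>/a^4"
    by (simp add: abs_mult)
  moreover have "I - (1/(2*a\<^sup>2*h) + 3*b/a^4 * ln h)
      = J + leading_primitive a h M - 3*b*log_primitive a h M + 3*b*(11/6)/a^4"
    unfolding J_def by (simp add: add_divide_distrib algebra_simps)
  ultimately show "\<bar>I - (1/(2*a\<^sup>2*h) + 3*b/a^4 * ln h)\<bar> \<le> M * (6*c1\<^sup>2/a^5 + 3*c2/a^4)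
      + 1/(a^3*M) + (3*\<bar>b\<bar>) * ((\<bar>ln (a*M)\<bar> + \<bar>ln (a*M + 1)\<bar> + 3)/a^4) + 11/2*\<bar>b\<bar>/a^4"
    by linarith
qed

lemma two_cap_integral_asymptotics:
  fixes R S L R1 R3 :: real
  assumes R: "R > 0" and S: "S > 0" and L: "0 < L" "L < min R S"
    and R1: "1 / R1 = 1 / S + 1 / R" and R3: "1 / R3 ^ 3 = 1 / S ^ 3 + 1 / R ^ 3"
  shows "\<exists>C. \<forall>h\<in>{0<..1}.
    \<bar>integral {0..L\<^sup>2} (\<lambda>\<rho>. \<rho>/(h + cap_height S \<rho> + cap_height R \<rho>)^3)
      - (2*R1\<^sup>2/h - 6*R1^4/R3^3 * \<bar>ln h\<bar>)\<bar> \<le> C"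
proof -
  define a where "a = 1/(2*S) + 1/(2*R)"
  define b where "b = 1/(8*S^3) + 1/(8*R^3)"
  define c1 where "c1 = 1/(2*S^3) + 1/(2*R^3)"
  define c2 where "c2 = 1/(2*S^5) + 1/(2*R^5)"
  have "L\<^sup>2 \<le> S\<^sup>2" "L\<^sup>2 \<le> R\<^sup>2"
    using L by (auto intro!: power_mono)
  then have expansion: "a*\<rho> \<le> cap_height S \<rho> + cap_height R \<rho>
      \<and> cap_height S \<rho> + cap_height R \<rho> - a*\<rho> \<le> c1*\<rho>\<^sup>2
      \<and> \<bar>cap_height S \<rho> + cap_height R \<rho> - a*\<rho> - b*\<rho>\<^sup>2\<bar> \<le> c2*\<rho>^3"
    if "\<rho> \<in> {0..L\<^sup>2}" for \<rho>
    using that cap_height_bounds[OF S, of \<rho>] cap_height_bounds[OF R, of \<rho>]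
    unfolding a_def b_def c1_def c2_def by (auto simp: field_simps abs_le_iff)
  have continuous: "continuous_on {0..L\<^sup>2} (\<lambda>\<rho>. cap_height S \<rho> + cap_height R \<rho>)"
    unfolding cap_height_def by (intro continuous_intros)
  have "a > 0" "c2 \<ge> 0" "L\<^sup>2 > 0"
    unfolding a_def c2_def using R S L by (simp_all add: add_pos_pos add_nonneg_nonneg)
  then obtain C where C: "\<forall>h\<in>{0<..1}.
    \<bar>integral {0..L\<^sup>2} (\<lambda>\<rho>. \<rho>/(h + (cap_height S \<rho> + cap_height R \<rho>))^3)
      - (1/(2*a\<^sup>2*h) + 3*b/a^4 * ln h)\<bar> \<le> C"
    using inverse_cube_integral_asymptotics[OF _ _ _ continuous expansion] by blast
  have "a = (1/S + 1/R)/2" "b = (1/S^3 + 1/R^3)/8"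
    unfolding a_def b_def by simp_all
  then have "a = 1/(2*R1)" "b = 1/(8*R3^3)"
    unfolding R1[symmetric] R3[symmetric] by simp_all
  then have coefficients: "1/(2*a\<^sup>2) = 2*R1\<^sup>2" "3*b/a^4 = 6*R1^4/R3^3"
    by (simp_all add: power_divide power_mult_distrib)
  show ?thesis
  proof (intro exI ballI)
    fix h :: real assume h: "h \<in> {0<..1}"
    then have "ln h \<le> 0" by simp
    have "1/(2*a\<^sup>2*h) + 3*b/a^4 * ln h = (1/(2*a\<^sup>2))/h + (3*b/a^4) * ln h"
      by simp
    also have "\<dots> = 2*R1\<^sup>2/h - 6*R1^4/R3^3 * \<bar>ln h\<bar>"
      unfolding coefficients using \<open>ln h \<le> 0\<close> by simp
    finally have leading_terms: "1/(2*a\<^sup>2*h) + 3*b/a^4 * ln h = 2*R1\<^sup>2/h - 6*R1^4/R3^3 * \<bar>ln h\<bar>" .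
    from C h show "\<bar>integral {0..L\<^sup>2} (\<lambda>\<rho>. \<rho>/(h + cap_height S \<rho> + cap_height R \<rho>)^3)
      - (2*R1\<^sup>2/h - 6*R1^4/R3^3 * \<bar>ln h\<bar>)\<bar> \<le> C"
      unfolding add.assoc leading_terms[symmetric] by blast
  qed
qed

section \<open>Integrals of radial functions over a disc\<close>

lemma norm_less_sqrt_iff: "norm x < sqrt t \<longleftrightarrow> (norm x)\<^sup>2 < t"
  by (metis real_sqrt_abs abs_norm_cancel real_sqrt_less_iff)

lemma norm_le_sqrt_iff: "norm x \<le> sqrt t \<longleftrightarrow> (norm x)\<^sup>2 \<le> t"
  by (metis real_sqrt_abs abs_norm_cancel real_sqrt_le_iff)

lemma integral_one_ball_plane:
  assumes "r \<ge> 0"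
  shows "integral (ball (0::real\<times>real) r) (\<lambda>_. 1::real) = pi * r\<^sup>2"
proof -
  have "integral (ball (0::real\<times>real) r) (\<lambda>_. 1::real) = measure lborel (ball (0::real\<times>real) r)"
    by (simp add: lmeasure_integral[symmetric])
  also have "\<dots> = pi * r\<^sup>2"
    using content_ball[OF assms, of "0::real\<times>real"] by (simp add: unit_ball_vol_2 power2_eq_square)
  finally show ?thesis .
qed

lemma integrable_on_lmeasurable_subset:
  fixes f :: "'a::euclidean_space \<Rightarrow> real"
  assumes f: "continuous_on K f" and K: "compact K" and S: "S \<in> lmeasurable" "S \<subseteq> K"
  shows "f integrable_on S"
proof -
  obtain B where B: "\<And>x. x \<in> K \<Longrightarrow> \<bar>f x\<bar> \<le> B"
    using compact_imp_bounded[OF compact_continuous_image[OF f K]] by (auto simp: bounded_iff)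
  show ?thesis
  proof (rule measurable_bounded_by_integrable_imp_integrable_real[where g="\<lambda>_. B"])
    show "f \<in> borel_measurable (lebesgue_on S)"
      using continuous_on_subset[OF f S(2)] S(1)
      by (intro continuous_imp_measurable_on_sets_lebesgue) auto
  qed (use S B in \<open>auto intro: integrable_on_const\<close>)
qed

lemma integral_ball_sqrt_split:
  fixes f :: "real \<times> real \<Rightarrow> real"
  assumes f: "continuous_on (cball 0 (sqrt M)) f" and st: "0 \<le> s" "s \<le> t" "t \<le> M"
  shows "integral (ball 0 (sqrt t)) f
    = integral (ball 0 (sqrt s)) f + integral (ball 0 (sqrt t) - ball 0 (sqrt s)) f"
proof -
  have "f integrable_on ball 0 (sqrt s)" "f integrable_on ball 0 (sqrt t) - ball 0 (sqrt s)"
    using st by (intro integrable_on_lmeasurable_subset[OF f compact_cball] fmeasurable_Diff;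
        auto simp: norm_less_sqrt_iff norm_le_sqrt_iff)+
  moreover have "ball (0::real \<times> real) (sqrt t) = ball 0 (sqrt s) \<union> (ball 0 (sqrt t) - ball 0 (sqrt s))"
    using st by (auto simp: norm_less_sqrt_iff)
  ultimately show ?thesis
    by (metis Diff_disjoint integral_Un negligible_empty)
qed

lemma radial_annulus_integral_estimate:
  fixes F :: "real \<Rightarrow> real"
  defines "f \<equiv> \<lambda>p::real\<times>real. F ((norm p)\<^sup>2)"
  assumes F: "continuous_on {0..M} F" and st: "0 \<le> s" "s \<le> t" "t \<le> M"
    and close: "\<And>\<rho>. s \<le> \<rho> \<Longrightarrow> \<rho> < t \<Longrightarrow> \<bar>F \<rho> - c\<bar> \<le> e"
  shows "\<bar>integral (ball 0 (sqrt t)) f - integral (ball 0 (sqrt s)) f - pi*c*(t - s)\<bar> \<le> pi*e*(t - s)"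
proof -
  define D where "D = ball (0::real\<times>real) (sqrt t) - ball 0 (sqrt s)"
  have f: "continuous_on (cball 0 (sqrt M)) f"
    unfolding f_def using st
    by (intro continuous_on_compose2[OF F] continuous_intros) (auto simp: norm_le_sqrt_iff)
  have D: "D \<in> lmeasurable" "D \<subseteq> cball 0 (sqrt M)"
    using st by (auto simp: D_def norm_le_sqrt_iff norm_less_sqrt_iff intro!: fmeasurable_Diff)
  have fD: "f integrable_on D"
    using integrable_on_lmeasurable_subset[OF f compact_cball D] .
  have area: "integral D (\<lambda>_. 1::real) = pi*(t - s)"
    using integral_ball_sqrt_split[OF continuous_on_const st, of 1]
      integral_one_ball_plane[of "sqrt t"] integral_one_ball_plane[of "sqrt s"] st
    by (simp add: D_def algebra_simps)
  have "norm (integral D (\<lambda>p. f p - c)) \<le> integral D (\<lambda>_. e)"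
  proof (rule integral_norm_bound_integral)
    show "norm (f p - c) \<le> e" if "p \<in> D" for p
    proof -
      have "s \<le> (norm p)\<^sup>2" "(norm p)\<^sup>2 < t"
        using that by (auto simp: D_def norm_less_sqrt_iff)
      then show ?thesis using close by (simp add: f_def)
    qed
  qed (use fD D in \<open>auto intro: integrable_diff integrable_on_const\<close>)
  moreover have "integral D (\<lambda>p. f p - c) = integral D f - c * integral D (\<lambda>_. 1::real)"
    using fD D by (simp add: integral_diff integrable_on_const flip: integral_mult_right)
  moreover have "integral D (\<lambda>_. e) = e * integral D (\<lambda>_. 1::real)"
    by (simp flip: integral_mult_right)
  ultimately have "\<bar>integral D f - pi*c*(t - s)\<bar> \<le> pi*e*(t - s)"
    unfolding area by (simp add: algebra_simps)
  then show ?thesis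
    using integral_ball_sqrt_split[OF f st] by (simp add: D_def)
qed

lemma integral_radial_ball_plane:
  fixes F :: "real \<Rightarrow> real"
  assumes F: "continuous_on {0..r\<^sup>2} F" and r: "r \<ge> 0"
  shows "integral (ball (0::real\<times>real) r) (\<lambda>p. F ((norm p)\<^sup>2)) = pi * integral {0..r\<^sup>2} F"
proof -
  define M where "M = r\<^sup>2"
  define B where "B = (\<lambda>s. integral (ball (0::real\<times>real) (sqrt s)) (\<lambda>p. F ((norm p)\<^sup>2)))"
  have "(B has_vector_derivative pi * F s) (at s within {0..M})" if s: "s \<in> {0..M}" for s
    unfolding has_vector_derivative_def has_derivative_within_alt
  proof (intro conjI allI impI bounded_linear_scaleR_left)
    fix e :: real assume "e > 0"
    then obtain d where d: "d > 0" "\<And>y. y \<in> {0..M} \<Longrightarrow> dist y s < d \<Longrightarrow> \<bar>F y - F s\<bar> < e/pi"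
      using F s unfolding M_def continuous_on_iff dist_real_def by (metis divide_pos_pos pi_gt_zero)
    show "\<exists>d>0. \<forall>y\<in>{0..M}. norm (y - s) < d \<longrightarrow>
        norm (B y - B s - (y - s) *\<^sub>R (pi * F s)) \<le> e * norm (y - s)"
    proof (intro exI[of _ d] conjI ballI impI d(1))
      fix y assume y: "y \<in> {0..M}" and "norm (y - s) < d"
      then have close: "\<bar>F \<rho> - F s\<bar> \<le> e/pi" if "min s y \<le> \<rho>" "\<rho> < max s y" for \<rho>
        using d(2)[of \<rho>] that s by (force simp: dist_real_def)
      show "norm (B y - B s - (y - s) *\<^sub>R (pi * F s)) \<le> e * norm (y - s)"
      proof (cases "s \<le> y")
        case True
        then show ?thesis
          using radial_annulus_integral_estimate[OF F[folded M_def], of s y "F s" "e/pi"] s y close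
          by (simp add: B_def algebra_simps)
      next
        case False
        then show ?thesis
          using radial_annulus_integral_estimate[OF F[folded M_def], of y s "F s" "e/pi"] s y close
          by (simp add: B_def algebra_simps abs_minus_commute)
      qed
    qed
  qed
  then have "((\<lambda>s. pi * F s) has_integral B M - B 0) {0..M}"
    unfolding M_def by (intro fundamental_theorem_of_calculus) auto
  then have "integral {0..M} (\<lambda>s. pi * F s) = B M - B 0"
    by (rule integral_unique)
  then show ?thesis
    using r by (simp add: B_def M_def)
qed

section \<open>A comparison principle for divergence-form operators\<close>

definition plane_trace :: "(real \<times> real \<Rightarrow> real \<times> real) \<Rightarrow> real" where
  "plane_trace A = fst (A (1, 0)) + snd (A (0, 1))"

lemma has_real_derivative_along_line:
  fixes f :: "'a::real_normed_vector \<Rightarrow> real"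
  assumes "(f has_derivative f') (at (p + t *\<^sub>R e))"
  shows "((\<lambda>s. f (p + s *\<^sub>R e)) has_real_derivative f' e) (at t)"
proof -
  have "((\<lambda>s. p + s *\<^sub>R e) has_derivative (\<lambda>s. s *\<^sub>R e)) (at t)"
    by (auto intro!: derivative_eq_intros)
  from has_derivative_compose[OF this assms]
  have "((\<lambda>s. f (p + s *\<^sub>R e)) has_derivative (\<lambda>s. f' (s *\<^sub>R e))) (at t)" .
  moreover have "(\<lambda>s. f' (s *\<^sub>R e)) = (\<lambda>s. f' e * s)"
    using linear_scale[OF has_derivative_linear[OF assms]] by (auto simp: mult.commute)
  ultimately show ?thesis
    by (simp add: has_field_derivative_def)
qed

lemma local_max_weighted_derivative_nonpos:
  fixes g g' \<gamma> :: "real \<Rightarrow> real"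
  assumes r: "r > 0"
    and dg: "\<And>t. \<bar>t\<bar> < r \<Longrightarrow> (g has_real_derivative g' t) (at t)"
    and max: "\<And>t. \<bar>t\<bar> < r \<Longrightarrow> g t \<le> g 0"
    and \<gamma>: "\<And>t. \<bar>t\<bar> < r \<Longrightarrow> \<gamma> t > 0"
    and dk: "((\<lambda>t. \<gamma> t * g' t) has_real_derivative D) (at 0)"
  shows "D \<le> 0"
proof (rule ccontr)
  assume "\<not> D \<le> 0"
  then have "D > 0" by simp
  have "g' 0 = 0"
    using DERIV_local_max[OF dg[of 0] r] max r by simp
  \<comment> \<open>So \<open>\<gamma> g'\<close> vanishes at \<open>0\<close> and increases there: \<open>g\<close> increases just to the right of \<open>0\<close>.\<close>
  obtain d where d: "d > 0" "\<And>t. 0 < t \<Longrightarrow> t < d \<Longrightarrow> \<gamma> 0 * g' 0 < \<gamma> t * g' t"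
    using DERIV_pos_inc_right[OF dk \<open>D > 0\<close>] by (metis add_0)
  define \<tau> where "\<tau> = min d r / 2"
  have \<tau>: "0 < \<tau>" "\<tau> < d" "\<tau> < r"
    using d r by (auto simp: \<tau>_def)
  obtain z where z: "0 < z" "z < \<tau>" "g \<tau> - g 0 = \<tau> * g' z"
    using MVT2[of 0 \<tau> g g'] dg \<tau> by force
  have "\<gamma> z * g' z > 0" "\<gamma> z > 0"
    using d(2)[of z] \<open>g' 0 = 0\<close> z \<tau> \<gamma>[of z] by auto
  then have "g' z > 0"
    by (simp add: zero_less_mult_iff)
  then have "g \<tau> > g 0"
    using z \<tau> by (simp add: algebra_simps)
  moreover have "g \<tau> \<le> g 0"
    using max \<tau> by simp
  ultimately show False by simp
qed

lemma flux_derivative_nonpos_at_interior_max: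
  fixes v \<Gamma> :: "'a::real_inner \<Rightarrow> real" and V K :: "'a \<Rightarrow> 'a"
  assumes U: "open U" "p \<in> U"
    and max: "\<And>q. q \<in> U \<Longrightarrow> v q \<le> v p"
    and dv: "\<And>q. q \<in> U \<Longrightarrow> (v has_derivative (\<lambda>x. V q \<bullet> x)) (at q)"
    and \<Gamma>: "\<And>q. q \<in> U \<Longrightarrow> \<Gamma> q > 0"
    and dflux: "((\<lambda>q. \<Gamma> q *\<^sub>R V q) has_derivative K) (at p)"
    and e: "norm e = 1"
  shows "K e \<bullet> e \<le> 0"
proof -
  obtain r where r: "r > 0" "ball p r \<subseteq> U"
    using U open_contains_ball by blast
  have line: "p + t *\<^sub>R e \<in> U" if "\<bar>t\<bar> < r" for t
    using that r e by (auto simp: dist_norm)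
  have "((\<lambda>q. (\<Gamma> q *\<^sub>R V q) \<bullet> e) has_derivative (\<lambda>x. K x \<bullet> e)) (at (p + 0 *\<^sub>R e))"
    using has_derivative_inner_left[OF dflux, of e] by simp
  from has_real_derivative_along_line[OF this]
  have "((\<lambda>t. \<Gamma> (p + t *\<^sub>R e) * (V (p + t *\<^sub>R e) \<bullet> e)) has_real_derivative K e \<bullet> e) (at 0)"
    by simp
  then show ?thesis
    using r(1) has_real_derivative_along_line[OF dv[OF line]] max line \<Gamma> line
    by (intro local_max_weighted_derivative_nonpos[where g = "\<lambda>t. v (p + t *\<^sub>R e)"]) auto
qed

lemma strict_flux_subsolution_no_interior_max:
  fixes v \<Gamma> :: "real \<times> real \<Rightarrow> real" and V K :: "real \<times> real \<Rightarrow> real \<times> real"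
  assumes U: "open U" "p \<in> U"
    and max: "\<And>q. q \<in> U \<Longrightarrow> v q \<le> v p"
    and dv: "\<And>q. q \<in> U \<Longrightarrow> (v has_derivative (\<lambda>x. V q \<bullet> x)) (at q)"
    and \<Gamma>: "\<And>q. q \<in> U \<Longrightarrow> \<Gamma> q > 0"
    and dflux: "((\<lambda>q. \<Gamma> q *\<^sub>R V q) has_derivative K) (at p)"
  shows "plane_trace K \<le> 0"
proof -
  have "K (1, 0) \<bullet> (1, 0) \<le> 0" "K (0, 1) \<bullet> (0, 1) \<le> 0"
    by (rule flux_derivative_nonpos_at_interior_max[OF U max dv \<Gamma> dflux]; simp)+
  then show ?thesis
    by (simp add: plane_trace_def inner_prod_def)
qed

lemma flux_subsolution_max_principle:
  fixes u \<phi> \<Gamma> :: "real \<times> real \<Rightarrow> real" and H P :: "real \<times> real \<Rightarrow> real \<times> real"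
    and K Q :: "real \<times> real \<Rightarrow> real \<times> real \<Rightarrow> real \<times> real"
  assumes u: "continuous_on (cball 0 L) u" "\<And>q. q \<in> sphere 0 L \<Longrightarrow> u q \<le> 0"
    and du: "\<And>q. q \<in> ball 0 L \<Longrightarrow> (u has_derivative (\<lambda>x. H q \<bullet> x)) (at q)"
    and dflux: "\<And>q. q \<in> ball 0 L \<Longrightarrow> ((\<lambda>q. \<Gamma> q *\<^sub>R H q) has_derivative K q) (at q)"
    and subsolution: "\<And>q. q \<in> ball 0 L \<Longrightarrow> plane_trace (K q) \<ge> 0"
    and \<phi>: "continuous_on (cball 0 L) \<phi>"
    and d\<phi>: "\<And>q. q \<in> ball 0 L \<Longrightarrow> (\<phi> has_derivative (\<lambda>x. P q \<bullet> x)) (at q)"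
    and d\<phi>flux: "\<And>q. q \<in> ball 0 L \<Longrightarrow> ((\<lambda>q. \<Gamma> q *\<^sub>R P q) has_derivative Q q) (at q)"
    and strict: "\<And>q. q \<in> ball 0 L \<Longrightarrow> plane_trace (Q q) > 0"
    and \<Gamma>: "\<And>q. q \<in> ball 0 L \<Longrightarrow> \<Gamma> q > 0"
    and p: "p \<in> ball 0 L"
  shows "u p \<le> 0"
proof (rule ccontr)
  assume "\<not> u p \<le> 0"
  then have up: "u p > 0" by simp
  obtain B where B: "\<And>q. q \<in> cball 0 L \<Longrightarrow> \<bar>\<phi> q\<bar> \<le> B"
    using compact_imp_bounded[OF compact_continuous_image[OF \<phi> compact_cball]]
    unfolding bounded_iff by (metis imageI real_norm_def)
  have "B \<ge> 0" using B[of p] p by auto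
  \<comment> \<open>The perturbation \<open>\<epsilon> \<phi>\<close> is too small to move the maximum of \<open>u\<close> to the boundary,
      but makes the flux strictly expanding.\<close>
  define \<epsilon> where "\<epsilon> = u p / (2*B + 1)"
  have \<epsilon>: "\<epsilon> > 0" "2*\<epsilon>*B < u p"
    using up \<open>B \<ge> 0\<close> by (auto simp: \<epsilon>_def field_simps)
  define v where "v = (\<lambda>q. u q + \<epsilon> * \<phi> q)"
  have "continuous_on (cball 0 L) v"
    unfolding v_def using u(1) \<phi> by (intro continuous_intros)
  moreover have "cball (0::real \<times> real) L \<noteq> {}"
    using p ball_subset_cball by blast
  ultimately obtain p1 where p1: "p1 \<in> cball 0 L" "\<And>q. q \<in> cball 0 L \<Longrightarrow> v q \<le> v p1"
    using continuous_attains_sup[OF compact_cball] by blast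
  have "p1 \<in> ball 0 L"
  proof (rule ccontr)
    assume "p1 \<notin> ball 0 L"
    then have "u p1 \<le> 0"
      using p1(1) u(2) by auto
    moreover have "\<epsilon> * \<phi> p1 \<le> \<epsilon> * B" "\<epsilon> * (- \<phi> p) \<le> \<epsilon> * B"
      using B[of p1] B[of p] p1(1) p \<epsilon> by (intro mult_left_mono; force simp: abs_le_iff)+
    moreover have "v p \<le> v p1"
      using p1(2) p by auto
    ultimately show False
      using \<epsilon> unfolding v_def by linarith
  qed
  then have max: "\<And>q. q \<in> ball 0 L \<Longrightarrow> v q \<le> v p1"
    using p1(2) by auto
  have dv: "(v has_derivative (\<lambda>x. (H q + \<epsilon> *\<^sub>R P q) \<bullet> x)) (at q)" if "q \<in> ball 0 L" for q
    unfolding v_def inner_add_left inner_scaleR_left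
    by (intro has_derivative_add has_derivative_mult_right du d\<phi> that)
  have "((\<lambda>q. \<Gamma> q *\<^sub>R (H q + \<epsilon> *\<^sub>R P q)) has_derivative (\<lambda>x. K p1 x + \<epsilon> *\<^sub>R Q p1 x)) (at p1)"
    unfolding scaleR_add_right scaleR_left_commute[of "\<Gamma> _"]
    by (intro has_derivative_add has_derivative_scaleR_right dflux d\<phi>flux \<open>p1 \<in> ball 0 L\<close>)
  from strict_flux_subsolution_no_interior_max[OF open_ball \<open>p1 \<in> ball 0 L\<close> max dv \<Gamma> this]
  have "plane_trace (K p1) + \<epsilon> * plane_trace (Q p1) \<le> 0"
    by (simp add: plane_trace_def algebra_simps)
  moreover have "\<epsilon> * plane_trace (Q p1) > 0"
    using strict \<open>p1 \<in> ball 0 L\<close> \<epsilon> by simp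
  ultimately show False
    using subsolution \<open>p1 \<in> ball 0 L\<close> by fastforce
qed

lemma divergence_free_flux_zero_boundary:
  fixes u \<phi> \<Gamma> :: "real \<times> real \<Rightarrow> real" and H P :: "real \<times> real \<Rightarrow> real \<times> real"
    and K Q :: "real \<times> real \<Rightarrow> real \<times> real \<Rightarrow> real \<times> real"
  assumes u: "continuous_on (cball 0 L) u" "\<And>q. q \<in> sphere 0 L \<Longrightarrow> u q = 0"
    and du: "\<And>q. q \<in> ball 0 L \<Longrightarrow> (u has_derivative (\<lambda>x. H q \<bullet> x)) (at q)"
    and dflux: "\<And>q. q \<in> ball 0 L \<Longrightarrow> ((\<lambda>q. \<Gamma> q *\<^sub>R H q) has_derivative K q) (at q)"
    and divergence_free: "\<And>q. q \<in> ball 0 L \<Longrightarrow> plane_trace (K q) = 0"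
    and \<phi>: "continuous_on (cball 0 L) \<phi>"
    and d\<phi>: "\<And>q. q \<in> ball 0 L \<Longrightarrow> (\<phi> has_derivative (\<lambda>x. P q \<bullet> x)) (at q)"
    and d\<phi>flux: "\<And>q. q \<in> ball 0 L \<Longrightarrow> ((\<lambda>q. \<Gamma> q *\<^sub>R P q) has_derivative Q q) (at q)"
    and strict: "\<And>q. q \<in> ball 0 L \<Longrightarrow> plane_trace (Q q) > 0"
    and \<Gamma>: "\<And>q. q \<in> ball 0 L \<Longrightarrow> \<Gamma> q > 0"
    and p: "p \<in> ball 0 L"
  shows "u p = 0"
proof -
  have "u p \<le> 0"
    using flux_subsolution_max_principle[OF u(1) _ du dflux _ \<phi> d\<phi> d\<phi>flux strict \<Gamma> p]
      u(2) divergence_free by simp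
  moreover have "- u p \<le> 0"
  proof (rule flux_subsolution_max_principle[OF _ _ _ _ _ \<phi> d\<phi> d\<phi>flux strict \<Gamma> p,
        where H = "\<lambda>q. - H q" and K = "\<lambda>q x. - K q x"])
    show "((\<lambda>q. \<Gamma> q *\<^sub>R - H q) has_derivative (\<lambda>x. - K q x)) (at q)" if "q \<in> ball 0 L" for q
      using has_derivative_minus[OF dflux[OF that]] by simp
    show "plane_trace (\<lambda>x. - K q x) \<ge> 0" if "q \<in> ball 0 L" for q
      using divergence_free[OF that] by (simp add: plane_trace_def)
  qed (use u du in \<open>auto intro!: continuous_intros derivative_eq_intros\<close>)
  ultimately show ?thesis by simp
qed

section \<open>Radial solutions and the energy\<close>

lemma radial_potential:
  fixes g :: "real \<Rightarrow> real" and L :: real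
  assumes g: "continuous_on {0..L\<^sup>2} g" "\<And>\<rho>. \<rho> \<in> {0..L\<^sup>2} \<Longrightarrow> g \<rho> > 0"
  defines "\<Phi> \<equiv> \<lambda>p::'a::real_inner. integral {0..(norm p)\<^sup>2} (\<lambda>s. 1 / g s)"
    and "P \<equiv> \<lambda>q::'a. (2 / g ((norm q)\<^sup>2)) *\<^sub>R q"
  shows "continuous_on (cball 0 L) \<Phi>"
    and "\<And>q. q \<in> ball 0 L \<Longrightarrow> (\<Phi> has_derivative (\<lambda>x. P q \<bullet> x)) (at q)"
    and "\<And>q. q \<in> ball 0 L \<Longrightarrow>
      ((\<lambda>q. g ((norm q)\<^sup>2) *\<^sub>R P q) has_derivative (\<lambda>x. 2 *\<^sub>R x)) (at q)"
proof -
  have "continuous_on {0..L\<^sup>2} (\<lambda>s. 1 / g s)"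
    using g by (intro continuous_intros) force+
  then have d\<Psi>: "((\<lambda>\<rho>. integral {0..\<rho>} (\<lambda>s. 1 / g s)) has_real_derivative 1 / g \<rho>)
      (at \<rho> within {0..L\<^sup>2})" if "\<rho> \<in> {0..L\<^sup>2}" for \<rho>
    using integral_has_real_derivative that by blast
  have sq: "(norm p)\<^sup>2 \<in> {0..L\<^sup>2}" if "p \<in> cball 0 L" for p :: 'a
    using that by (auto intro: power_mono)
  have "continuous_on {0..L\<^sup>2} (\<lambda>\<rho>. integral {0..\<rho>} (\<lambda>s. 1 / g s))"
    using d\<Psi> DERIV_continuous continuous_on_eq_continuous_within by blast
  then show "continuous_on (cball 0 L) \<Phi>"
    unfolding \<Phi>_def
    by (rule continuous_on_compose2) (use sq in \<open>auto intro!: continuous_intros\<close>)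
  fix q :: 'a assume q: "q \<in> ball 0 L"
  have "(\<Phi> has_derivative (\<lambda>x. 1 / g ((norm q)\<^sup>2) * (2 *\<^sub>R (q \<bullet> x)))) (at q within ball 0 L)"
    unfolding \<Phi>_def
    by (rule has_derivative_in_compose2[where t = "{0..L\<^sup>2}" and f = "\<lambda>p. (norm p)\<^sup>2"
          and g = "\<lambda>\<rho>. integral {0..\<rho>} (\<lambda>s. 1 / g s)" and g' = "\<lambda>\<rho>. (*) (1 / g \<rho>)"])
      (use d\<Psi> sq q has_derivative_subset[OF has_derivative_sqnorm_at subset_UNIV] in
        \<open>auto simp: has_field_derivative_def\<close>)
  then show "(\<Phi> has_derivative (\<lambda>x. P q \<bullet> x)) (at q)"
    using at_within_open[OF q open_ball] by (simp add: P_def algebra_simps)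
  have flux: "2 *\<^sub>R x = g ((norm x)\<^sup>2) *\<^sub>R P x" if "x \<in> ball 0 L" for x
  proof -
    have "g ((norm x)\<^sup>2) > 0" using that by (auto intro!: g(2) power_mono)
    then show ?thesis by (simp add: P_def)
  qed
  show "((\<lambda>q. g ((norm q)\<^sup>2) *\<^sub>R P q) has_derivative (\<lambda>x. 2 *\<^sub>R x)) (at q)"
    using has_derivative_scaleR_right[OF has_derivative_ident, of 2 "at q"] open_ball q flux
    by (rule has_derivative_transform_within_open)
qed

lemma radial_flux_solution_eq:
  fixes g :: "real \<Rightarrow> real" and w :: "real \<times> real \<Rightarrow> real"
    and G :: "real \<times> real \<Rightarrow> real \<times> real" and F' :: "real \<times> real \<Rightarrow> real \<times> real \<Rightarrow> real \<times> real"
  assumes g: "continuous_on {0..L\<^sup>2} g" "\<And>\<rho>. \<rho> \<in> {0..L\<^sup>2} \<Longrightarrow> g \<rho> > 0"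
    and w: "continuous_on (cball 0 L) w" "\<And>q. q \<in> sphere 0 L \<Longrightarrow> w q = 0"
    and dw: "\<And>q. q \<in> ball 0 L \<Longrightarrow> (w has_derivative (\<lambda>x. G q \<bullet> x)) (at q)"
    and dflux: "\<And>q. q \<in> ball 0 L \<Longrightarrow> ((\<lambda>q. g ((norm q)\<^sup>2) *\<^sub>R G q) has_derivative F' q) (at q)"
    and equation: "\<And>q. q \<in> ball 0 L \<Longrightarrow> - (1/12) * plane_trace (F' q) = f0"
    and p: "p \<in> ball 0 L"
  shows "w p = 3 * f0 * (integral {0..L\<^sup>2} (\<lambda>s. 1 / g s) - integral {0..(norm p)\<^sup>2} (\<lambda>s. 1 / g s))"
proof -
  define \<Phi> where "\<Phi> = (\<lambda>q::real \<times> real. integral {0..(norm q)\<^sup>2} (\<lambda>s. 1 / g s))"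
  define P where "P = (\<lambda>q::real \<times> real. (2 / g ((norm q)\<^sup>2)) *\<^sub>R q)"
  have \<Phi>: "continuous_on (cball 0 L) \<Phi>"
    "\<And>q. q \<in> ball 0 L \<Longrightarrow> (\<Phi> has_derivative (\<lambda>x. P q \<bullet> x)) (at q)"
    "\<And>q. q \<in> ball 0 L \<Longrightarrow>
      ((\<lambda>q. g ((norm q)\<^sup>2) *\<^sub>R P q) has_derivative (\<lambda>x. 2 *\<^sub>R x)) (at q)"
    unfolding \<Phi>_def P_def using radial_potential[of L g] g by blast+
  \<comment> \<open>\<open>\<Phi>\<close> has flux \<open>2 q\<close>: it is a strict subsolution, and \<open>- 3 f\<^sub>0 \<Phi>\<close> has the flux
      \<open>- 6 f\<^sub>0 q\<close> of a solution.\<close>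
  define u where "u = (\<lambda>q. w q + 3 * f0 * \<Phi> q - 3 * f0 * integral {0..L\<^sup>2} (\<lambda>s. 1 / g s))"
  have "u p = 0"
  proof (rule divergence_free_flux_zero_boundary[where H = "\<lambda>q. G q + (3 * f0) *\<^sub>R P q"
        and K = "\<lambda>q x. F' q x + (6 * f0) *\<^sub>R x", OF _ _ _ _ _ \<Phi>(1) \<Phi>(2) \<Phi>(3) _ _ p])
    show "continuous_on (cball 0 L) u"
      unfolding u_def using w(1) \<Phi>(1) by (intro continuous_intros)
    show "u q = 0" if "q \<in> sphere 0 L" for q
      using w(2)[OF that] that by (simp add: u_def \<Phi>_def)
    show "(u has_derivative (\<lambda>x. (G q + (3 * f0) *\<^sub>R P q) \<bullet> x)) (at q)" if "q \<in> ball 0 L" for q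
      unfolding u_def inner_add_left inner_scaleR_left using dw[OF that] \<Phi>(2)[OF that]
      by (auto intro!: derivative_eq_intros)
    show "((\<lambda>q. g ((norm q)\<^sup>2) *\<^sub>R (G q + (3 * f0) *\<^sub>R P q)) has_derivative
        (\<lambda>x. F' q x + (6 * f0) *\<^sub>R x)) (at q)" if "q \<in> ball 0 L" for q
      using has_derivative_add[OF dflux[OF that] has_derivative_scaleR_right[OF \<Phi>(3)[OF that],
          of "3 * f0"]]
      by (simp add: scaleR_add_right mult.commute)
    show "plane_trace (\<lambda>x. F' q x + (6 * f0) *\<^sub>R x) = 0" if "q \<in> ball 0 L" for q
    proof -
      have "plane_trace (\<lambda>x. F' q x + (6 * f0) *\<^sub>R x) = plane_trace (F' q) + 12 * f0"
        by (simp add: plane_trace_def)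
      then show ?thesis using equation[OF that] by linarith
    qed
    show "plane_trace (\<lambda>x. 2 *\<^sub>R x) > 0" for q :: "real \<times> real"
      by (simp add: plane_trace_def)
    show "g ((norm q)\<^sup>2) > 0" if "q \<in> ball 0 L" for q
      using that by (auto intro!: g(2) power_mono)
  qed
  then show ?thesis
    by (simp add: u_def \<Phi>_def algebra_simps)
qed

lemma radial_flux_solution_gradient:
  fixes g :: "real \<Rightarrow> real" and w :: "real \<times> real \<Rightarrow> real"
    and G :: "real \<times> real \<Rightarrow> real \<times> real" and F' :: "real \<times> real \<Rightarrow> real \<times> real \<Rightarrow> real \<times> real"
  assumes g: "continuous_on {0..L\<^sup>2} g" "\<And>\<rho>. \<rho> \<in> {0..L\<^sup>2} \<Longrightarrow> g \<rho> > 0"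
    and w: "continuous_on (cball 0 L) w" "\<And>q. q \<in> sphere 0 L \<Longrightarrow> w q = 0"
    and dw: "\<And>q. q \<in> ball 0 L \<Longrightarrow> (w has_derivative (\<lambda>x. G q \<bullet> x)) (at q)"
    and dflux: "\<And>q. q \<in> ball 0 L \<Longrightarrow> ((\<lambda>q. g ((norm q)\<^sup>2) *\<^sub>R G q) has_derivative F' q) (at q)"
    and equation: "\<And>q. q \<in> ball 0 L \<Longrightarrow> - (1/12) * plane_trace (F' q) = f0"
    and p: "p \<in> ball 0 L"
  shows "G p = (- 6 * f0 / g ((norm p)\<^sup>2)) *\<^sub>R p"
proof -
  define P where "P = (\<lambda>q::real \<times> real. (2 / g ((norm q)\<^sup>2)) *\<^sub>R q)"
  have "((\<lambda>q. integral {0..(norm q)\<^sup>2} (\<lambda>s. 1 / g s)) has_derivative (\<lambda>x. P p \<bullet> x)) (at p)"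
    using radial_potential(2)[of L g p] g p by (simp add: P_def)
  then have "((\<lambda>q. 3 * f0 * (integral {0..L\<^sup>2} (\<lambda>s. 1 / g s) - integral {0..(norm q)\<^sup>2} (\<lambda>s. 1 / g s)))
      has_derivative (\<lambda>x. 3 * f0 * (0 - P p \<bullet> x))) (at p)"
    by (intro has_derivative_mult_right has_derivative_diff has_derivative_const)
  moreover have "(\<lambda>x. 3 * f0 * (0 - P p \<bullet> x)) = (\<lambda>x. (- (3 * f0) *\<^sub>R P p) \<bullet> x)"
    by auto
  ultimately have "((\<lambda>q. 3 * f0 * (integral {0..L\<^sup>2} (\<lambda>s. 1 / g s) - integral {0..(norm q)\<^sup>2} (\<lambda>s. 1 / g s)))
      has_derivative (\<lambda>x. (- (3 * f0) *\<^sub>R P p) \<bullet> x)) (at p)"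
    by simp
  then have "(w has_derivative (\<lambda>x. (- (3 * f0) *\<^sub>R P p) \<bullet> x)) (at p)"
    by (rule has_derivative_transform_within_open[OF _ open_ball p])
      (use radial_flux_solution_eq[OF g w dw dflux equation] in simp)
  from has_derivative_unique[OF dw[OF p] this]
  have "G p = - (3 * f0) *\<^sub>R P p"
    unfolding fun_eq_iff vector_eq_rdot .
  then show ?thesis
    by (simp add: P_def)
qed

lemma gap_eq_cap_heights:
  "gap R S h p = h + cap_height S ((norm p)\<^sup>2) + cap_height R ((norm p)\<^sup>2)"
  by (cases p) (simp add: gap_def gamma_t_def gamma_b_def cap_height_def norm_Pair diff_diff_eq)

lemma gap_profile_pos:
  assumes R: "R > 0" and S: "S > 0" and L: "0 < L" "L < min R S" and h: "h > 0"
    and \<rho>: "\<rho> \<in> {0..L\<^sup>2}"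
  shows "h + cap_height S \<rho> + cap_height R \<rho> > 0"
proof -
  have "L\<^sup>2 \<le> S\<^sup>2" "L\<^sup>2 \<le> R\<^sup>2"
    using L by (auto intro!: power_mono)
  then have "\<rho> \<le> S\<^sup>2" "\<rho> \<le> R\<^sup>2"
    using \<rho> by auto
  moreover have "0 \<le> \<rho> / (2*S)" "0 \<le> \<rho> / (2*R)"
    using \<rho> R S by auto
  ultimately show ?thesis
    using cap_height_bounds(1)[OF S, of \<rho>] cap_height_bounds(1)[OF R, of \<rho>] \<rho> h by auto
qed

lemma reynolds_solution_gradient:
  fixes R S L h f0 :: real and w :: "real \<times> real \<Rightarrow> real" and G :: "real \<times> real \<Rightarrow> real \<times> real"
  assumes R: "R > 0" and S: "S > 0" and L: "0 < L" "L < min R S" and h: "h > 0"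
    and sol: "solves_reynolds R S h L f0 w G" and p: "p \<in> ball 0 L"
  shows "G p = (- 6 * f0 / (h + cap_height S ((norm p)\<^sup>2) + cap_height R ((norm p)\<^sup>2))^3) *\<^sub>R p"
proof -
  define \<gamma> where "\<gamma> = (\<lambda>\<rho>. h + cap_height S \<rho> + cap_height R \<rho>)"
  from sol obtain F' where w: "continuous_on (cball 0 L) w" "\<And>q. q \<in> sphere 0 L \<Longrightarrow> w q = 0"
    and dw: "\<And>q. q \<in> ball 0 L \<Longrightarrow> (w has_derivative (\<lambda>x. G q \<bullet> x)) (at q)"
    and dflux: "\<And>q. q \<in> ball 0 L \<Longrightarrow> ((\<lambda>q. (\<gamma> ((norm q)\<^sup>2))^3 *\<^sub>R G q) has_derivative F' q) (at q)"
    and equation: "\<And>q. q \<in> ball 0 L \<Longrightarrow> - (1/12) * plane_trace (F' q) = f0"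
    unfolding solves_reynolds_def plane_trace_def gap_eq_cap_heights \<gamma>_def by blast
  have "continuous_on {0..L\<^sup>2} (\<lambda>\<rho>. (\<gamma> \<rho>)^3)"
    unfolding \<gamma>_def cap_height_def by (intro continuous_intros)
  moreover have "(\<gamma> \<rho>)^3 > 0" if "\<rho> \<in> {0..L\<^sup>2}" for \<rho>
    using gap_profile_pos[OF R S L h that] by (simp add: \<gamma>_def)
  ultimately show ?thesis
    using radial_flux_solution_gradient[OF _ _ w dw dflux equation p] by (simp add: \<gamma>_def)
qed

lemma reynolds_energy_radial_integral:
  fixes R S L h f0 :: real and w :: "real \<times> real \<Rightarrow> real" and G :: "real \<times> real \<Rightarrow> real \<times> real"
  assumes R: "R > 0" and S: "S > 0" and L: "0 < L" "L < min R S" and h: "h > 0"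
    and sol: "solves_reynolds R S h L f0 w G"
  shows "integral (ball 0 L) (\<lambda>p. (gap R S h p)^3 * (norm (G p))\<^sup>2)
    = 36 * pi * f0\<^sup>2 * integral {0..L\<^sup>2} (\<lambda>\<rho>. \<rho> / (h + cap_height S \<rho> + cap_height R \<rho>)^3)"
proof -
  define \<gamma> where "\<gamma> = (\<lambda>\<rho>. h + cap_height S \<rho> + cap_height R \<rho>)"
  have \<gamma>_pos: "\<gamma> \<rho> > 0" if "\<rho> \<in> {0..L\<^sup>2}" for \<rho>
    using gap_profile_pos[OF R S L h that] by (simp add: \<gamma>_def)
  have "(gap R S h p)^3 * (norm (G p))\<^sup>2 = 36 * f0\<^sup>2 * ((norm p)\<^sup>2 / (\<gamma> ((norm p)\<^sup>2))^3)"
    if p: "p \<in> ball 0 L" for p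
  proof -
    define c where "c = \<gamma> ((norm p)\<^sup>2)"
    have "(norm p)\<^sup>2 \<le> L\<^sup>2"
      using p by (auto intro!: power_mono)
    then have "c > 0" "gap R S h p = c"
      using \<gamma>_pos[of "(norm p)\<^sup>2"] by (auto simp: c_def \<gamma>_def gap_eq_cap_heights)
    moreover have "(norm (G p))\<^sup>2 = (6 * f0 / c^3)\<^sup>2 * (norm p)\<^sup>2"
      using reynolds_solution_gradient[OF R S L h sol p]
      by (simp add: c_def \<gamma>_def power_mult_distrib power_divide)
    moreover have "c^3 * ((6 * f0 / c^3)\<^sup>2 * (norm p)\<^sup>2) = 36 * f0\<^sup>2 * ((norm p)\<^sup>2 / c^3)"
      using \<open>c > 0\<close> by (simp add: power2_eq_square field_simps eval_nat_numeral)
    ultimately show ?thesis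
      by (simp add: c_def)
  qed
  then have "integral (ball 0 L) (\<lambda>p. (gap R S h p)^3 * (norm (G p))\<^sup>2)
      = integral (ball 0 L) (\<lambda>p::real \<times> real. 36 * f0\<^sup>2 * ((norm p)\<^sup>2 / (\<gamma> ((norm p)\<^sup>2))^3))"
    by (rule Henstock_Kurzweil_Integration.integral_cong)
  also have "\<dots> = pi * integral {0..L\<^sup>2} (\<lambda>\<rho>. 36 * f0\<^sup>2 * (\<rho> / (\<gamma> \<rho>)^3))"
    using \<gamma>_pos L unfolding \<gamma>_def cap_height_def
    by (intro integral_radial_ball_plane continuous_intros) (force simp: less_imp_le)+
  also have "\<dots> = 36 * pi * f0\<^sup>2 * integral {0..L\<^sup>2} (\<lambda>\<rho>. \<rho> / (\<gamma> \<rho>)^3)"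
    by (simp only: integral_mult_right mult_ac)
  finally show ?thesis
    by (simp only: \<gamma>_def)
qed

theorem proposition7:
  fixes R S L R1 R3 f0 :: real
  assumes "R > 0" and "S > 0" and "0 < L" and "L < min R S"
    and "R1 > 0" and "1 / R1 = 1 / S + 1 / R"
    and "R3 > 0" and "1 / R3 ^ 3 = 1 / S ^ 3 + 1 / R ^ 3"
  shows "\<exists>C. \<forall>h\<in>{0<..1}. \<forall>w G. solves_reynolds R S h L f0 w G \<longrightarrow>
           \<bar>integral (ball 0 L) (\<lambda>p. (gap R S h p)^3 * (norm (G p))\<^sup>2)
             - 72 * pi * \<bar>f0\<bar>\<^sup>2 * (R1\<^sup>2 / h - 3 * R1 ^ 4 / R3 ^ 3 * \<bar>ln h\<bar>)\<bar> \<le> C"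
proof -
  obtain C where C: "\<forall>h\<in>{0<..1}.
    \<bar>integral {0..L\<^sup>2} (\<lambda>\<rho>. \<rho>/(h + cap_height S \<rho> + cap_height R \<rho>)^3)
      - (2*R1\<^sup>2/h - 6*R1^4/R3^3 * \<bar>ln h\<bar>)\<bar> \<le> C"
    using two_cap_integral_asymptotics[OF assms(1-4,6,8)] by blast
  show ?thesis
  proof (intro exI[of _ "36 * pi * f0\<^sup>2 * C"] ballI allI impI)
    fix h w G assume h: "h \<in> {0<..1}" and sol: "solves_reynolds R S h L f0 w G"
    then have "integral (ball 0 L) (\<lambda>p. (gap R S h p)^3 * (norm (G p))\<^sup>2)
        - 72 * pi * \<bar>f0\<bar>\<^sup>2 * (R1\<^sup>2 / h - 3 * R1 ^ 4 / R3 ^ 3 * \<bar>ln h\<bar>)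
      = 36 * pi * f0\<^sup>2 * (integral {0..L\<^sup>2} (\<lambda>\<rho>. \<rho>/(h + cap_height S \<rho> + cap_height R \<rho>)^3)
        - (2*R1\<^sup>2/h - 6*R1^4/R3^3 * \<bar>ln h\<bar>))"
      using reynolds_energy_radial_integral[OF assms(1-4) _ sol] by (simp add: algebra_simps)
    then show "\<bar>integral (ball 0 L) (\<lambda>p. (gap R S h p)^3 * (norm (G p))\<^sup>2)
        - 72 * pi * \<bar>f0\<bar>\<^sup>2 * (R1\<^sup>2 / h - 3 * R1 ^ 4 / R3 ^ 3 * \<bar>ln h\<bar>)\<bar>
      \<le> 36 * pi * f0\<^sup>2 * C"
      using C h by (simp add: abs_mult mult_left_mono)
  qed
qed

end
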